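(* Let $n > m\ge 1$ be integers with $n\ge 2m$, let $\mathbb{S}\subseteq\mathbb{R}$, and let $f:\mathbb{S}\to\mathbb{R}^n$ be a function. Let $U=\begin{bmatrix}U_1 & U_2\end{bmatrix}\in\mathbb{R}^{n\times n}$ be an orthogonal matrix with $U_1\in\mathbb{R}^{n\times m}$, $U_2\in\mathbb{R}^{n\times(n-m)}$, whose columns form a complete basis of the range of $f(\mu)$ for all $\mu\in\mathbb{S}$. Let $P\in\mathbb{R}^{n\times m}$ be a selection operator such that $P^TU_1$ is invertible, and let $\sigma_1\ge\cdots\ge\sigma_m>0$ be the singular values of $P^TU_1$. Let $\mu_1,\dots,\mu_N\in\mathbb{S}$, $f_i:=f(\mu_i)$, $\tilde f_i:=U_1(P^TU_1)^{-1}P^Tf_i$, $\hat f_i:=U_1U_1^Tf_i$, and $X:=U_2^T\begin{bmatrix} f_1 & f_2 & \cdots & f_N\end{bmatrix}\in\mathbb{R}^{(n-m)\times N}$. Let $\lambda_1(XX^T)\ge\lambda_2(XX^T)\ge\cdots\ge\lambda_{n-m}(XX^T)\ge0$ be the eigenvalues of $XX^T$. Then $$\frac1N\sum_{i=1}^N\lVert\tilde f_i-\hat f_i\rVert_2^2\le\frac1N\sum_{i=1}^m\left(\sigma_{m-i+1}^{-2}-1\right)\lambda_i(XX^T).$$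
   Context: A selection (mask) operator $P\in\mathbb{R}^{n\times m}$ is a matrix whose columns are $m$ distinct columns of the identity matrix $\mathbb{I}_n$. $\lVert\cdot\rVert_2$ is the Euclidean norm. *)

theory Defs
  imports "Jordan_Normal_Form.Char_Poly"
begin

definition selection_operator :: "nat \<Rightarrow> nat \<Rightarrow> real mat \<Rightarrow> bool" where
  "selection_operator n m P \<longleftrightarrow> P \<in> carrier_mat n m \<and>
     (\<exists>p. inj_on p {..<m} \<and> p ` {..<m} \<subseteq> {..<n} \<and>
          (\<forall>i<n. \<forall>j<m. P $$ (i,j) = (if i = p j then 1 else 0)))"

text \<open>Eigenvalues (with multiplicity) of a square real matrix whose characteristic polynomial
  splits over the reals, listed in non-increasing order: the unique sorted list of roots.\<close>
definition eigvals_desc :: "real mat \<Rightarrow> real list" where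
  "eigvals_desc A = (THE ls. length ls = dim_row A \<and> sorted_wrt (\<ge>) ls \<and>
       char_poly A = prod_list (map (\<lambda>a. [:- a, 1:]) ls))"

definition sing_vals_desc :: "real mat \<Rightarrow> real list" where
  "sing_vals_desc B = map sqrt (eigvals_desc (transpose_mat B * B))"

definition hconcat :: "real mat \<Rightarrow> real mat \<Rightarrow> real mat" where
  "hconcat A B = mat (dim_row A) (dim_col A + dim_col B)
     (\<lambda>(i,j). if j < dim_col A then A $$ (i,j) else B $$ (i, j - dim_col A))"

end

theory Submission
  imports Defs
begin

(*
  Write B = P^T U1 and C = P^T U2.  Orthogonality of [U1 U2] and P^T P = I give
  B B^T + C C^T = I, and the error of sample i is U1 B^-1 C x_i, where x_i is the
  i-th column of X.  Diagonalising B B^T = Y diag(s) Y^T (so s = sigma^2) and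
  X X^T = V diag(lambda) V^T, the total squared error becomes
  sum_{i,k} W_ik^2 lambda_k / s_i with W = Y^T C V, whose rows are orthogonal with
  squared norms 1 - s_i.  So D_ik = W_ik^2 / (1 - s_i) is doubly substochastic
  (for the column sums, W^T diag(1/(1 - s)) W is an orthogonal projection), and a
  rearrangement inequality bounds sum_{i,k} (1/s_i - 1) lambda_k D_ik by pairing the
  largest weights 1/s_i - 1 with the largest eigenvalues lambda_k.  Since m <= n - m,
  there are enough eigenvalues for this pairing.
*)

section \<open>Gram matrices\<close>

text \<open>Variants of assoc_mult_mat and transpose_mult whose side conditions the simplifier
  discharges from equations between dimensions.\<close>

lemma assoc_mult_mat_dim:
  fixes A B C :: "'a :: semiring_0 mat"
  assumes "dim_col A = dim_row B" and "dim_col B = dim_row C"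
  shows "A * B * C = A * (B * C)"
  using assms by (intro assoc_mult_mat[of _ "dim_row A" "dim_col A" _ "dim_col B" _ "dim_col C"]) auto

lemma transpose_mult_dim:
  fixes A B :: "'a :: comm_semiring_0 mat"
  assumes "dim_col A = dim_row B"
  shows "transpose_mat (A * B) = transpose_mat B * transpose_mat A"
  using assms by (intro transpose_mult[of _ "dim_row A" "dim_col A" _ "dim_col B"]) auto

lemma transpose_mult_conj:
  fixes A W R :: "'a :: comm_ring_1 mat"
  assumes "A \<in> carrier_mat n n" "W \<in> carrier_mat n n" "R \<in> carrier_mat n n"
  shows "transpose_mat (W * R) * A * (W * R) = transpose_mat R * (transpose_mat W * A * W) * R"
  using assms by (simp add: transpose_mult[of _ n n _ n] assoc_mult_mat[of _ n n _ n _ n])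

lemma diag_conj_mat_diag:
  fixes W :: "'a :: comm_ring_1 mat"
  assumes W: "W \<in> carrier_mat m q" and i: "i < m"
  shows "(W * mat_diag q g * transpose_mat W) $$ (i, i) = (\<Sum>k<q. (W $$ (i, k))\<^sup>2 * g k)"
  using W i unfolding mat_diag_mult_right[OF W]
  by (simp add: scalar_prod_def lessThan_atLeast0 power2_eq_square algebra_simps)

lemma scalar_prod_self_mult_mat_vec:
  fixes A :: "real mat"
  assumes A: "A \<in> carrier_mat r m" and w: "w \<in> carrier_vec m"
    and gram: "transpose_mat A * A = mat_diag m g"
  shows "(A *\<^sub>v w) \<bullet> (A *\<^sub>v w) = (\<Sum>i<m. g i * (w $ i)\<^sup>2)"
proof -
  have "(A *\<^sub>v w) \<bullet> (A *\<^sub>v w) = ((transpose_mat A * A) *\<^sub>v w) \<bullet> w"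
    using transpose_vec_mult_scalar[OF A w, of "A *\<^sub>v w"] A w
    by (simp add: assoc_mult_mat_vec[of _ m r _ m])
  also have "\<dots> = (\<Sum>i<m. g i * (w $ i)\<^sup>2)"
    using w unfolding gram
    by (simp add: mat_diag_def scalar_prod_def lessThan_atLeast0 power2_eq_square mult.assoc
        if_distrib[where f="\<lambda>x. x * _"] cong: if_cong)
  finally show ?thesis .
qed

lemma inverse_gram_diag:
  fixes H Hinv :: "real mat"
  assumes H: "H \<in> carrier_mat m m" and Hinv: "Hinv \<in> carrier_mat m m" and inv: "Hinv * H = 1\<^sub>m m"
    and gram: "H * transpose_mat H = mat_diag m s" and s: "\<And>i. i < m \<Longrightarrow> s i \<noteq> 0"
  shows "transpose_mat Hinv * Hinv = mat_diag m (\<lambda>i. 1 / s i)"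
proof -
  note dims = carrier_matD[OF H] carrier_matD[OF Hinv]
  have "H * Hinv = 1\<^sub>m m" using mat_mult_left_right_inverse[OF Hinv H inv] .
  then have "transpose_mat Hinv * transpose_mat H = 1\<^sub>m m"
    using transpose_mult_dim[of H Hinv] by (simp add: dims)
  then have "transpose_mat Hinv * (Hinv * H) * transpose_mat H = 1\<^sub>m m"
    using Hinv by (simp add: inv)
  then have left_inv: "transpose_mat Hinv * Hinv * mat_diag m s = 1\<^sub>m m"
    by (simp add: assoc_mult_mat_dim dims flip: gram)
  have right_inv: "mat_diag m s * mat_diag m (\<lambda>i. 1 / s i) = 1\<^sub>m m"
    unfolding mat_diag_diag using s by (auto intro!: eq_matI simp: mat_diag_def)
  have "transpose_mat Hinv * Hinv = transpose_mat Hinv * Hinv * (mat_diag m s * mat_diag m (\<lambda>i. 1 / s i))"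
    unfolding right_inv using Hinv by simp
  also have "\<dots> = transpose_mat Hinv * Hinv * mat_diag m s * mat_diag m (\<lambda>i. 1 / s i)"
    by (rule assoc_mult_mat_dim[symmetric]) (simp_all add: dims mat_diag_def)
  also have "\<dots> = mat_diag m (\<lambda>i. 1 / s i)"
    unfolding left_inv by (rule left_mult_one_mat[OF mat_diag_dim])
  finally show ?thesis .
qed

lemma gram_diag_pos_if_invertible:
  fixes H Hinv :: "real mat"
  assumes H: "H \<in> carrier_mat m m" and Hinv: "Hinv \<in> carrier_mat m m" and inv: "Hinv * H = 1\<^sub>m m"
    and gram: "H * transpose_mat H = mat_diag m s" and i: "i < m"
  shows "0 < s i"
proof -
  have s_i: "s i = row H i \<bullet> row H i"
    using arg_cong[OF gram, of "\<lambda>A. A $$ (i, i)"] H i by (simp add: mat_diag_def)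
  have "H * Hinv = 1\<^sub>m m" using mat_mult_left_right_inverse[OF Hinv H inv] .
  then have "(H * Hinv) $$ (i, i) = 1" using i by simp
  then have "row H i \<bullet> col Hinv i = 1" using H Hinv i by simp
  moreover have "0\<^sub>v m \<bullet> col Hinv i = 0" using Hinv i by simp
  ultimately have "row H i \<noteq> 0\<^sub>v m" by auto
  moreover have "row H i \<in> carrier_vec m" using row_carrier[of H i] H by simp
  ultimately show ?thesis
    unfolding s_i using conjugate_square_greater_0_vec[of "row H i" m] by simp
qed

lemma symmetric_idempotent_diag_le_one:
  fixes M :: "real mat"
  assumes M: "M \<in> carrier_mat q q" and sym: "transpose_mat M = M" and idem: "M * M = M"
    and k: "k < q"
  shows "M $$ (k, k) \<le> 1"
proof -
  have "M $$ (k, k) = (\<Sum>j<q. M $$ (k, j) * M $$ (j, k))"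
    using arg_cong[OF idem, of "\<lambda>A. A $$ (k, k)"] M k by (simp add: scalar_prod_def lessThan_atLeast0)
  also have "\<dots> = (\<Sum>j<q. M $$ (k, j) * M $$ (k, j))"
  proof (intro sum.cong refl)
    fix j assume "j \<in> {..<q}"
    then show "M $$ (k, j) * M $$ (j, k) = M $$ (k, j) * M $$ (k, j)"
      using arg_cong[OF sym, of "\<lambda>A. A $$ (j, k)"] M k by simp
  qed
  finally have "M $$ (k, k) * M $$ (k, k) \<le> M $$ (k, k)"
    using member_le_sum[of k "{..<q}" "\<lambda>j. M $$ (k, j) * M $$ (k, j)"] k by simp
  then show ?thesis using mult_le_cancel_left2[of "M $$ (k, k)" "M $$ (k, k)"] by linarith
qed

text \<open>The matrix W^T diag(1/t) W is an orthogonal projection whose diagonal entries are the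
  column sums below; since 1/0 = 0, rows of W with t i = 0 (which vanish) drop out.\<close>
lemma column_sum_le_one_if_gram_diag:
  fixes W :: "real mat"
  assumes W: "W \<in> carrier_mat m q" and gram: "W * transpose_mat W = mat_diag m t" and k: "k < q"
  shows "(\<Sum>i<m. (W $$ (i, k))\<^sup>2 / t i) \<le> 1"
proof -
  define D where "D = mat_diag m (\<lambda>i. 1 / t i)"
  define M where "M = transpose_mat W * (D * W)"
  have D: "D \<in> carrier_mat m m" by (simp add: D_def)
  note dims = carrier_matD[OF W] carrier_matD[OF D]
  have "(\<lambda>i. 1 / t i * t i * (1 / t i)) = (\<lambda>i. 1 / t i)" by (simp add: fun_eq_iff)
  then have "D * (W * transpose_mat W) * D = D"
    unfolding gram D_def mat_diag_diag by simp
  then have "D * (W * transpose_mat W) * D * W = D * W" by simp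
  then have "D * (W * (transpose_mat W * (D * W))) = D * W"
    by (simp add: assoc_mult_mat_dim dims)
  then have idem: "M * M = M"
    unfolding M_def by (simp add: assoc_mult_mat_dim dims)
  have "transpose_mat D = D" by (auto simp: D_def mat_diag_def)
  then have sym: "transpose_mat M = M"
    unfolding M_def by (simp add: transpose_mult_dim assoc_mult_mat_dim dims)
  have "M \<in> carrier_mat q q" using W D by (simp add: M_def)
  then have "M $$ (k, k) \<le> 1" by (rule symmetric_idempotent_diag_le_one[OF _ sym idem k])
  moreover have "M $$ (k, k) = (\<Sum>i<m. (W $$ (i, k))\<^sup>2 / t i)"
    using W k unfolding M_def D_def mat_diag_mult_left[OF W]
    by (simp add: scalar_prod_def lessThan_atLeast0 power2_eq_square)
  ultimately show ?thesis by simp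
qed

section \<open>Spectral theorem for real symmetric matrices\<close>

lemma real_symmetric_eigenvalue_exists:
  fixes A :: "real mat"
  assumes A: "A \<in> carrier_mat n n" and sym: "transpose_mat A = A" and n: "0 < n"
  shows "\<exists>e. eigenvalue A e"
proof -
  let ?Ac = "map_mat complex_of_real A"
  have Ac: "?Ac \<in> carrier_mat n n" and Ac_sym: "transpose_mat ?Ac = ?Ac"
    using A sym by (auto simp: map_mat_transpose)
  obtain as where cp: "char_poly ?Ac = (\<Prod>a\<leftarrow>as. [:- a, 1:])" and "length as = n"
    using char_poly_factorized[OF Ac] by blast
  then obtain z where "z \<in> set as" using n by (cases as) auto
  then have "eigenvalue ?Ac z"
    unfolding eigenvalue_root_char_poly[OF Ac] cp by (simp add: poly_prod_list_zero_iff)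
  then obtain w where w: "w \<in> carrier_vec n" "w \<noteq> 0\<^sub>v n" and Aw: "?Ac *\<^sub>v w = z \<cdot>\<^sub>v w"
    unfolding eigenvalue_def eigenvector_def using Ac by auto
  have conj_Aw: "conjugate (?Ac *\<^sub>v w) = ?Ac *\<^sub>v conjugate w"
    using A w by (intro eq_vecI) (auto simp: scalar_prod_def)
  \<comment> \<open>The Hermitian form of a real symmetric matrix is real, hence z equals its conjugate.\<close>
  have "z * (w \<bullet>c w) = (?Ac *\<^sub>v w) \<bullet>c w"
    using w by (simp add: Aw)
  also have "\<dots> = w \<bullet> (?Ac *\<^sub>v conjugate w)"
    using transpose_vec_mult_scalar[OF Ac, of "conjugate w" w] w Ac_sym by simp
  also have "\<dots> = cnj z * (w \<bullet>c w)"
    using w by (simp flip: conj_Aw add: Aw conjugate_smult_vec)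
  finally have "z = cnj z" using w by simp
  then have z: "z = of_real (Re z)" by (simp add: complex_eq_iff)
  have "poly (char_poly ?Ac) z = 0"
    using \<open>eigenvalue ?Ac z\<close> eigenvalue_root_char_poly[OF Ac] by simp
  then have "poly (char_poly A) (Re z) = 0"
    by (subst (asm) z) (simp add: of_real_hom.char_poly_hom[OF A] of_real_hom.poly_map_poly)
  then show ?thesis using eigenvalue_root_char_poly[OF A] by blast
qed

lemma real_symmetric_max_eigenvalue:
  fixes A :: "real mat"
  assumes A: "A \<in> carrier_mat n n" and sym: "transpose_mat A = A" and n: "0 < n"
  obtains e v where "v \<in> carrier_vec n" "v \<bullet> v = 1" "A *\<^sub>v v = e \<cdot>\<^sub>v v"
    "\<And>x. eigenvalue A x \<Longrightarrow> x \<le> e"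
proof -
  let ?E = "{x. eigenvalue A x}"
  have "char_poly A \<noteq> 0" using degree_monic_char_poly[OF A] by auto
  then have "finite ?E"
    unfolding eigenvalue_root_char_poly[OF A] by (rule poly_roots_finite)
  moreover have "?E \<noteq> {}" using real_symmetric_eigenvalue_exists[OF A sym n] by auto
  ultimately have "eigenvalue A (Max ?E)" and max: "\<And>x. eigenvalue A x \<Longrightarrow> x \<le> Max ?E"
    using Max_in Max_ge by auto
  then obtain w where w: "w \<in> carrier_vec n" "w \<noteq> 0\<^sub>v n" and Aw: "A *\<^sub>v w = Max ?E \<cdot>\<^sub>v w"
    unfolding eigenvalue_def eigenvector_def using A by auto
  have ww: "w \<bullet> w > 0" using conjugate_square_greater_0_vec[OF w(1)] w(2) by simp
  define v where "v = (1 / sqrt (w \<bullet> w)) \<cdot>\<^sub>v w"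
  have "v \<in> carrier_vec n" using w by (simp add: v_def)
  moreover have "v \<bullet> v = 1"
    using w ww by (simp add: v_def)
  moreover have "A *\<^sub>v v = Max ?E \<cdot>\<^sub>v v"
    using A w by (simp add: v_def mult_mat_vec Aw smult_smult_assoc)
  ultimately show ?thesis using that max by blast
qed

lemma householder_mat_involution:
  fixes u :: "real vec"
  assumes u: "u \<in> carrier_vec n" and c: "c * (u \<bullet> u) = 2"
  defines "W \<equiv> mat n n (\<lambda>(i, j). of_bool (i = j) - c * u $ i * u $ j)"
  shows "W * W = 1\<^sub>m n"
proof (rule eq_matI)
  fix i j assume "i < dim_row (1\<^sub>m n :: real mat)" "j < dim_col (1\<^sub>m n :: real mat)"
  then have i: "i < n" and j: "j < n" by auto
  have "(W * W) $$ (i, j) = (\<Sum>k<n. (of_bool (i = k) - c * u $ i * u $ k) * (of_bool (k = j) - c * u $ k * u $ j))"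
    using i j by (simp add: W_def scalar_prod_def lessThan_atLeast0)
  also have "\<dots> = (\<Sum>k<n. (if k = i then of_bool (k = j) - c * u $ k * u $ j else 0)
      - (if k = j then c * u $ i * u $ k else 0) + c * c * u $ i * u $ j * (u $ k * u $ k))"
    by (intro sum.cong) (auto simp: algebra_simps)
  also have "\<dots> = of_bool (i = j) - 2 * c * u $ i * u $ j + c * (c * (u \<bullet> u)) * u $ i * u $ j"
    using i j u
      by (simp add: sum.distrib sum_subtractf sum_distrib_left[symmetric] scalar_prod_def lessThan_atLeast0)
  finally show "(W * W) $$ (i, j) = 1\<^sub>m n $$ (i, j)" using i j by (simp add: c)
qed (simp_all add: W_def)

lemma orthogonal_mat_with_first_col:
  fixes v :: "real vec"
  assumes v: "v \<in> carrier_vec n" and unit: "v \<bullet> v = 1" and n: "0 < n"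
  shows "\<exists>W \<in> carrier_mat n n. transpose_mat W * W = 1\<^sub>m n \<and> W *\<^sub>v unit_vec n 0 = v"
proof (cases "v = unit_vec n 0")
  case True
  then show ?thesis by (intro bexI[of _ "1\<^sub>m n"]) auto
next
  case False
  \<comment> \<open>The Householder reflection exchanging the first unit vector and v.\<close>
  define u where "u = v - unit_vec n 0"
  define c where "c = 2 / (u \<bullet> u)"
  define W where "W = mat n n (\<lambda>(i, j). of_bool (i = j) - c * u $ i * u $ j)"
  have u: "u \<in> carrier_vec n" using v by (simp add: u_def)
  have "u \<noteq> 0\<^sub>v n"
    using False v unfolding u_def
    by (metis comm_add_vec minus_add_minus_vec minus_cancel_vec uminus_eq_vec zero_minus_vec unit_vec_carrier)
  then have "u \<bullet> u \<noteq> 0"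
    using conjugate_square_eq_0_vec[OF u] by simp
  have u0: "u $ 0 = v $ 0 - 1" using v n by (simp add: u_def)
  have "u \<bullet> u = u \<bullet> (v - unit_vec n 0)" by (simp only: u_def)
  also have "\<dots> = u \<bullet> v - u $ 0" using u v n by (simp add: scalar_prod_minus_distrib[OF u v])
  also have "u \<bullet> v = 1 - v $ 0" using v unit n by (simp add: u_def minus_scalar_prod_distrib[of _ n])
  finally have "u \<bullet> u = - 2 * u $ 0" by (simp add: u0)
  with \<open>u \<bullet> u \<noteq> 0\<close> have cuu: "c * (u \<bullet> u) = 2" and cu0: "c * u $ 0 = -1"
    by (auto simp: c_def field_simps)
  have W: "W \<in> carrier_mat n n" by (simp add: W_def)
  have "transpose_mat W = W" by (auto simp: W_def)
  moreover have "W * W = 1\<^sub>m n"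
    unfolding W_def by (rule householder_mat_involution[OF u cuu])
  moreover have "W *\<^sub>v unit_vec n 0 = v"
  proof (rule eq_vecI)
    fix i assume "i < dim_vec v"
    then have i: "i < n" using v by simp
    have "(W *\<^sub>v unit_vec n 0) $ i = of_bool (i = 0) - (c * u $ 0) * u $ i"
      using i n by (simp add: W_def algebra_simps)
    also have "\<dots> = of_bool (i = 0) + u $ i" by (simp add: cu0)
    also have "\<dots> = v $ i" using i v by (simp add: u_def)
    finally show "(W *\<^sub>v unit_vec n 0) $ i = v $ i" .
  qed (use v W in auto)
  ultimately show ?thesis using W by metis
qed

lemma symmetric_deflation:
  fixes A W :: "real mat"
  assumes A: "A \<in> carrier_mat (Suc k) (Suc k)" and sym: "transpose_mat A = A"
    and W: "W \<in> carrier_mat (Suc k) (Suc k)" and WTW: "transpose_mat W * W = 1\<^sub>m (Suc k)"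
    and eig: "A *\<^sub>v (W *\<^sub>v unit_vec (Suc k) 0) = e \<cdot>\<^sub>v (W *\<^sub>v unit_vec (Suc k) 0)"
  obtains A' where "A' \<in> carrier_mat k k" "transpose_mat A' = A'"
    "transpose_mat W * A * W = four_block_mat (mat 1 1 (\<lambda>_. e)) (0\<^sub>m 1 k) (0\<^sub>m k 1) A'"
proof -
  define A1 where "A1 = transpose_mat W * A * W"
  have A1: "A1 \<in> carrier_mat (Suc k) (Suc k)" using A W by (simp add: A1_def)
  have sym1: "transpose_mat A1 = A1"
    using A W unfolding A1_def
    by (simp add: transpose_mult[of _ "Suc k" "Suc k" _ "Suc k"] sym assoc_mult_mat[of _ "Suc k" "Suc k" _ "Suc k" _ "Suc k"])
  have "A1 *\<^sub>v unit_vec (Suc k) 0 = transpose_mat W *\<^sub>v (A *\<^sub>v (W *\<^sub>v unit_vec (Suc k) 0))"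
    using A W by (simp add: A1_def assoc_mult_mat_vec[of _ "Suc k" "Suc k" _ "Suc k"])
  also have "\<dots> = e \<cdot>\<^sub>v ((transpose_mat W * W) *\<^sub>v unit_vec (Suc k) 0)"
    using W by (simp add: eig mult_mat_vec assoc_mult_mat_vec[of _ "Suc k" "Suc k" _ "Suc k"])
  finally have A1e: "A1 *\<^sub>v unit_vec (Suc k) 0 = e \<cdot>\<^sub>v unit_vec (Suc k) 0"
    by (simp add: WTW)
  have col0: "A1 $$ (i, 0) = (if i = 0 then e else 0)" if "i < Suc k" for i
    using arg_cong[OF A1e, of "\<lambda>v. v $ i"] that A1 by auto
  have A1_sym: "A1 $$ (j, i) = A1 $$ (i, j)" if "i < Suc k" "j < Suc k" for i j
    using arg_cong[OF sym1, of "\<lambda>M. M $$ (i, j)"] that A1 by auto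
  have row0: "A1 $$ (0, j) = (if j = 0 then e else 0)" if "j < Suc k" for j
    using col0[OF that] A1_sym[OF that] by simp
  define A' where "A' = mat k k (\<lambda>(i, j). A1 $$ (Suc i, Suc j))"
  show ?thesis
  proof
    show "A' \<in> carrier_mat k k" by (simp add: A'_def)
    show "transpose_mat A' = A'"
      by (intro eq_matI) (auto simp: A'_def A1_sym)
    show "transpose_mat W * A * W = four_block_mat (mat 1 1 (\<lambda>_. e)) (0\<^sub>m 1 k) (0\<^sub>m k 1) A'"
      unfolding A1_def[symmetric] using A1 col0 row0
      by (intro eq_matI) (auto simp: A'_def gr0_conv_Suc)
  qed
qed

lemma four_block_diag_conj:
  fixes Q D a :: "real mat"
  assumes Q: "Q \<in> carrier_mat k k" and D: "D \<in> carrier_mat k k" and a: "a \<in> carrier_mat 1 1"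
  shows "transpose_mat (four_block_mat (1\<^sub>m 1) (0\<^sub>m 1 k) (0\<^sub>m k 1) Q) * four_block_mat a (0\<^sub>m 1 k) (0\<^sub>m k 1) D
      * four_block_mat (1\<^sub>m 1) (0\<^sub>m 1 k) (0\<^sub>m k 1) Q
    = four_block_mat a (0\<^sub>m 1 k) (0\<^sub>m k 1) (transpose_mat Q * D * Q)"
proof -
  have QT: "transpose_mat Q \<in> carrier_mat k k" using Q by simp
  have RT: "transpose_mat (four_block_mat (1\<^sub>m 1) (0\<^sub>m 1 k) (0\<^sub>m k 1) Q)
      = four_block_mat (1\<^sub>m 1) (0\<^sub>m 1 k) (0\<^sub>m k 1) (transpose_mat Q)"
    using Q by (simp add: transpose_four_block_mat[OF one_carrier_mat zero_carrier_mat zero_carrier_mat Q])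
  have "transpose_mat (four_block_mat (1\<^sub>m 1) (0\<^sub>m 1 k) (0\<^sub>m k 1) Q) * four_block_mat a (0\<^sub>m 1 k) (0\<^sub>m k 1) D
      = four_block_mat a (0\<^sub>m 1 k) (0\<^sub>m k 1) (transpose_mat Q * D)"
    unfolding RT mult_four_block_mat[OF one_carrier_mat zero_carrier_mat zero_carrier_mat QT a zero_carrier_mat zero_carrier_mat D]
    using Q D a by simp
  also have "\<dots> * four_block_mat (1\<^sub>m 1) (0\<^sub>m 1 k) (0\<^sub>m k 1) Q
      = four_block_mat a (0\<^sub>m 1 k) (0\<^sub>m k 1) (transpose_mat Q * D * Q)"
    unfolding mult_four_block_mat[OF a zero_carrier_mat zero_carrier_mat mult_carrier_mat[OF QT D]
        one_carrier_mat zero_carrier_mat zero_carrier_mat Q]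
    using Q D a by simp
  finally show ?thesis .
qed

lemma char_poly_orthogonal_conj:
  fixes A Q :: "real mat"
  assumes A: "A \<in> carrier_mat n n" and Q: "Q \<in> carrier_mat n n" and QTQ: "transpose_mat Q * Q = 1\<^sub>m n"
  shows "char_poly (transpose_mat Q * A * Q) = char_poly A"
proof -
  have "transpose_mat Q \<in> carrier_mat n n" using Q by simp
  then have "Q * transpose_mat Q = 1\<^sub>m n"
    using mat_mult_left_right_inverse[OF _ Q QTQ] by blast
  then have "similar_mat (transpose_mat Q * A * Q) A"
    using A Q QTQ by (intro similar_matI[of _ _ "transpose_mat Q" Q n]) auto
  then show ?thesis by (rule char_poly_similar)
qed

lemma char_poly_mat_diag:
  fixes d :: "'a :: comm_ring_1 list"
  assumes "length d = n"
  shows "char_poly (mat_diag n (\<lambda>i. d ! i)) = (\<Prod>a\<leftarrow>d. [:- a, 1:])"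
proof -
  have "upper_triangular (mat_diag n (\<lambda>i. d ! i))"
    by (simp add: upper_triangular_def mat_diag_def)
  moreover have "diag_mat (mat_diag n (\<lambda>i. d ! i)) = d"
    using assms by (intro nth_equalityI) (auto simp: diag_mat_def mat_diag_def)
  ultimately show ?thesis by (metis char_poly_upper_triangular mat_diag_dim)
qed

lemma orthogonal_diag_extend:
  fixes A W A' Q' :: "real mat"
  assumes A: "A \<in> carrier_mat (Suc k) (Suc k)" and W: "W \<in> carrier_mat (Suc k) (Suc k)"
    and WTW: "transpose_mat W * W = 1\<^sub>m (Suc k)"
    and blk: "transpose_mat W * A * W = four_block_mat (mat 1 1 (\<lambda>_. e)) (0\<^sub>m 1 k) (0\<^sub>m k 1) A'"
    and A': "A' \<in> carrier_mat k k" and Q': "Q' \<in> carrier_mat k k" "transpose_mat Q' * Q' = 1\<^sub>m k"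
    and diag: "transpose_mat Q' * A' * Q' = mat_diag k (\<lambda>i. d ! i)"
  defines "Q \<equiv> W * four_block_mat (1\<^sub>m 1) (0\<^sub>m 1 k) (0\<^sub>m k 1) Q'"
  shows "Q \<in> carrier_mat (Suc k) (Suc k)" and "transpose_mat Q * Q = 1\<^sub>m (Suc k)"
    and "transpose_mat Q * A * Q = mat_diag (Suc k) (\<lambda>i. (e # d) ! i)"
proof -
  define R where "R = four_block_mat (1\<^sub>m 1) (0\<^sub>m 1 k) (0\<^sub>m k 1) Q'"
  have R: "R \<in> carrier_mat (Suc k) (Suc k)"
    using four_block_carrier_mat[OF one_carrier_mat Q'(1), of 1] by (simp add: R_def)
  have Q_R: "Q = W * R" by (simp only: Q_def R_def)
  show "Q \<in> carrier_mat (Suc k) (Suc k)" using W R by (simp add: Q_R)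
  show "transpose_mat Q * Q = 1\<^sub>m (Suc k)"
    using transpose_mult_conj[OF one_carrier_mat W R] four_block_diag_conj[OF Q'(1) one_carrier_mat one_carrier_mat]
    using W R Q' by (simp add: WTW Q_R R_def)
  have "transpose_mat Q * A * Q = transpose_mat R * four_block_mat (mat 1 1 (\<lambda>_. e)) (0\<^sub>m 1 k) (0\<^sub>m k 1) A' * R"
    using transpose_mult_conj[OF A W R] by (simp add: Q_R blk)
  also have "\<dots> = four_block_mat (mat 1 1 (\<lambda>_. e)) (0\<^sub>m 1 k) (0\<^sub>m k 1) (mat_diag k (\<lambda>i. d ! i))"
    unfolding R_def four_block_diag_conj[OF Q'(1) A' mat_carrier] diag ..
  also have "\<dots> = mat_diag (Suc k) (\<lambda>i. (e # d) ! i)"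
    by (rule eq_matI) (auto simp: mat_diag_def gr0_conv_Suc)
  finally show "transpose_mat Q * A * Q = mat_diag (Suc k) (\<lambda>i. (e # d) ! i)" .
qed

theorem real_symmetric_spectral:
  fixes A :: "real mat"
  assumes "A \<in> carrier_mat n n" and "transpose_mat A = A"
  shows "\<exists>Q d. Q \<in> carrier_mat n n \<and> transpose_mat Q * Q = 1\<^sub>m n \<and> length d = n \<and>
    sorted_wrt (\<ge>) d \<and> transpose_mat Q * A * Q = mat_diag n (\<lambda>i. d ! i)"
  using assms
proof (induction n arbitrary: A)
  case 0
  then show ?case by (intro exI[of _ "1\<^sub>m 0"] exI[of _ "[]"]) (auto intro!: eq_matI simp: mat_diag_def)
next
  case (Suc k)
  then have A: "A \<in> carrier_mat (Suc k) (Suc k)" and sym: "transpose_mat A = A" by auto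
  obtain e v where v: "v \<in> carrier_vec (Suc k)" "v \<bullet> v = 1" and Av: "A *\<^sub>v v = e \<cdot>\<^sub>v v"
    and max: "\<And>x. eigenvalue A x \<Longrightarrow> x \<le> e"
    using real_symmetric_max_eigenvalue[OF A sym] by blast
  obtain W where W: "W \<in> carrier_mat (Suc k) (Suc k)" and WTW: "transpose_mat W * W = 1\<^sub>m (Suc k)"
    and We: "W *\<^sub>v unit_vec (Suc k) 0 = v"
    using orthogonal_mat_with_first_col[OF v] by blast
  obtain A' where A': "A' \<in> carrier_mat k k" "transpose_mat A' = A'"
    and blk: "transpose_mat W * A * W = four_block_mat (mat 1 1 (\<lambda>_. e)) (0\<^sub>m 1 k) (0\<^sub>m k 1) A'"
    using symmetric_deflation[OF A sym W WTW] Av We by metis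
  obtain Q' d' where Q': "Q' \<in> carrier_mat k k" "transpose_mat Q' * Q' = 1\<^sub>m k"
    and d': "length d' = k" "sorted_wrt (\<ge>) d'" and diag': "transpose_mat Q' * A' * Q' = mat_diag k (\<lambda>i. d' ! i)"
    using Suc.IH[OF A'] by blast
  \<comment> \<open>The eigenvalues of the deflated block are eigenvalues of A, hence at most the maximal one e.\<close>
  have "char_poly A = char_poly (mat 1 1 (\<lambda>_. e)) * char_poly A'"
    using char_poly_orthogonal_conj[OF A W WTW] char_poly_four_block_zeros_col[OF _ _ A'(1)]
    unfolding blk by simp
  also have "char_poly A' = (\<Prod>a\<leftarrow>d'. [:- a, 1:])"
    using char_poly_orthogonal_conj[OF A'(1) Q'] char_poly_mat_diag[OF d'(1)] diag' by simp
  finally have "poly (char_poly A) x = 0" if "x \<in> set d'" for x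
    using that by (simp add: poly_prod_list_zero_iff)
  then have "sorted_wrt (\<ge>) (e # d')"
    using d'(2) max eigenvalue_root_char_poly[OF A] by auto
  with orthogonal_diag_extend[OF A W WTW blk A'(1) Q' diag'] d'(1) show ?case
    by (intro exI[of _ "W * four_block_mat (1\<^sub>m 1) (0\<^sub>m 1 k) (0\<^sub>m k 1) Q'"] exI[of _ "e # d'"]) simp
qed

section \<open>Eigenvalues and singular values in non-increasing order\<close>

lemma mset_eq_if_prod_linear_factors_eq:
  fixes xs ys :: "'a :: idom list"
  assumes "(\<Prod>a\<leftarrow>xs. [:- a, 1:]) = (\<Prod>a\<leftarrow>ys. [:- a, 1:])"
  shows "mset xs = mset ys"
  using assms
proof (induction xs arbitrary: ys)
  case Nil
  then show ?case using degree_linear_factors[of uminus ys] by simp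
next
  case (Cons x xs ys)
  have "poly (\<Prod>a\<leftarrow>ys. [:- a, 1:]) x = 0" unfolding Cons.prems[symmetric] by simp
  then have x: "x \<in> set ys" by (simp add: poly_prod_list_zero_iff)
  have "[:- x, 1:] * (\<Prod>a\<leftarrow>xs. [:- a, 1:]) = [:- x, 1:] * (\<Prod>a\<leftarrow>remove1 x ys. [:- a, 1:])"
    using Cons.prems unfolding prod_list_map_remove1[OF x] by simp
  then have "mset xs = mset (remove1 x ys)"
    by (intro Cons.IH) (simp del: mult_pCons_left)
  then show ?case using x by simp
qed

lemma eigvals_desc_eqI:
  fixes A :: "real mat"
  assumes A: "A \<in> carrier_mat n n" and d: "length d = n" "sorted_wrt (\<ge>) d"
    and cp: "char_poly A = (\<Prod>a\<leftarrow>d. [:- a, 1:])"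
  shows "eigvals_desc A = d"
  unfolding eigvals_desc_def
proof (rule the_equality)
  fix ls
  assume ls: "length ls = dim_row A \<and> sorted_wrt (\<ge>) ls \<and> char_poly A = (\<Prod>a\<leftarrow>ls. [:- a, 1:])"
  then have "mset (rev ls) = mset (rev d)"
    using mset_eq_if_prod_linear_factors_eq[of ls d] cp by simp
  moreover have "sorted (rev ls)" "sorted (rev d)"
    using ls d by (simp_all add: sorted_wrt_rev)
  ultimately show "ls = d"
    by (metis properties_for_sort rev_rev_ident)
qed (use A d cp in simp)

lemma eigvals_desc_symmetric:
  fixes A :: "real mat"
  assumes A: "A \<in> carrier_mat n n" and sym: "transpose_mat A = A"
  shows "length (eigvals_desc A) = n" and "sorted_wrt (\<ge>) (eigvals_desc A)"
    and "\<exists>Q \<in> carrier_mat n n. transpose_mat Q * Q = 1\<^sub>m n \<and>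
      transpose_mat Q * A * Q = mat_diag n (\<lambda>i. eigvals_desc A ! i)"
proof -
  obtain Q d where Q: "Q \<in> carrier_mat n n" "transpose_mat Q * Q = 1\<^sub>m n"
    and d: "length d = n" "sorted_wrt (\<ge>) d" and diag: "transpose_mat Q * A * Q = mat_diag n (\<lambda>i. d ! i)"
    using real_symmetric_spectral[OF A sym] by blast
  have "eigvals_desc A = d"
    using eigvals_desc_eqI[OF A d] char_poly_orthogonal_conj[OF A Q] char_poly_mat_diag[OF d(1)] diag
    by simp
  then show "length (eigvals_desc A) = n" "sorted_wrt (\<ge>) (eigvals_desc A)"
    and "\<exists>Q \<in> carrier_mat n n. transpose_mat Q * Q = 1\<^sub>m n \<and>
      transpose_mat Q * A * Q = mat_diag n (\<lambda>i. eigvals_desc A ! i)"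
    using Q d diag by auto
qed

lemma eigvals_desc_decomposition:
  fixes A :: "real mat"
  assumes A: "A \<in> carrier_mat n n" and sym: "transpose_mat A = A"
  obtains Q where "Q \<in> carrier_mat n n" "Q * transpose_mat Q = 1\<^sub>m n"
    "A = Q * mat_diag n (\<lambda>i. eigvals_desc A ! i) * transpose_mat Q"
proof -
  obtain Q where Q: "Q \<in> carrier_mat n n" and QTQ: "transpose_mat Q * Q = 1\<^sub>m n"
    and diag: "transpose_mat Q * A * Q = mat_diag n (\<lambda>i. eigvals_desc A ! i)"
    using eigvals_desc_symmetric(3)[OF A sym] by blast
  have QQT: "Q * transpose_mat Q = 1\<^sub>m n"
    using mat_mult_left_right_inverse[OF _ Q QTQ] Q by simp
  have "Q * (transpose_mat Q * A * Q) * transpose_mat Q = (Q * transpose_mat Q) * A * (Q * transpose_mat Q)"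
    using A Q by (simp add: assoc_mult_mat[of _ n n _ n _ n])
  then have "A = Q * mat_diag n (\<lambda>i. eigvals_desc A ! i) * transpose_mat Q"
    using A by (simp add: QQT flip: diag)
  with Q QQT show ?thesis by (rule that)
qed

lemma eigvals_desc_gram_nonneg:
  fixes M :: "real mat"
  assumes M: "M \<in> carrier_mat n k" and i: "i < n"
  shows "eigvals_desc (M * transpose_mat M) ! i \<ge> 0"
proof -
  have MMT: "M * transpose_mat M \<in> carrier_mat n n" using M by simp
  have "transpose_mat (M * transpose_mat M) = M * transpose_mat M"
    using M by (simp add: transpose_mult[OF M])
  then obtain Q where Q: "Q \<in> carrier_mat n n"
    and diag: "transpose_mat Q * (M * transpose_mat M) * Q = mat_diag n (\<lambda>i. eigvals_desc (M * transpose_mat M) ! i)"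
    using eigvals_desc_symmetric(3)[OF MMT] by blast
  define R where "R = transpose_mat Q * M"
  have R: "R \<in> carrier_mat n k" using Q M by (simp add: R_def)
  have "transpose_mat Q * (M * transpose_mat M) * Q = R * transpose_mat R"
    using Q M by (simp add: R_def transpose_mult[of _ n n] assoc_mult_mat[of _ n n _ k _ n]
        assoc_mult_mat[of _ n n _ n _ n] assoc_mult_mat[of _ k n _ n _ n])
  then have "eigvals_desc (M * transpose_mat M) ! i = row R i \<bullet> row R i"
    using arg_cong[OF diag, of "\<lambda>A. A $$ (i, i)"] i R by (simp add: mat_diag_def)
  then show ?thesis using conjugate_square_ge_0_vec[of "row R i"] by simp
qed

lemma eigvals_desc_transpose_mult_swap:
  fixes B Binv :: "real mat"
  assumes B: "B \<in> carrier_mat m m" and Binv: "Binv \<in> carrier_mat m m" and inv: "Binv * B = 1\<^sub>m m"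
  shows "eigvals_desc (transpose_mat B * B) = eigvals_desc (B * transpose_mat B)"
proof -
  have "B * Binv = 1\<^sub>m m" using mat_mult_left_right_inverse[OF Binv B inv] .
  moreover have "Binv * (B * transpose_mat B) * B = (Binv * B) * (transpose_mat B * B)"
    using B Binv by (simp add: assoc_mult_mat[of _ m m _ m _ m])
  then have "Binv * (B * transpose_mat B) * B = transpose_mat B * B"
    using B by (simp add: inv)
  ultimately have "similar_mat (transpose_mat B * B) (B * transpose_mat B)"
    using B Binv inv by (intro similar_matI[of _ _ Binv B m]) auto
  then show ?thesis
    using B by (simp add: eigvals_desc_def char_poly_similar)
qed

lemma sing_vals_desc_sq:
  fixes B Binv :: "real mat"
  assumes B: "B \<in> carrier_mat m m" and Binv: "Binv \<in> carrier_mat m m" and inv: "Binv * B = 1\<^sub>m m"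
    and j: "j < m"
  shows "(sing_vals_desc B ! j)\<^sup>2 = eigvals_desc (B * transpose_mat B) ! j"
proof -
  have "B * transpose_mat B \<in> carrier_mat m m" "transpose_mat (B * transpose_mat B) = B * transpose_mat B"
    using B by (simp_all add: transpose_mult[OF B])
  then have "length (eigvals_desc (B * transpose_mat B)) = m"
    by (rule eigvals_desc_symmetric(1))
  then show ?thesis
    using j eigvals_desc_gram_nonneg[OF B j]
    by (simp add: sing_vals_desc_def eigvals_desc_transpose_mult_swap[OF B Binv inv])
qed

section \<open>A rearrangement inequality\<close>

lemma sum_weighted_le_sum_prefix:
  fixes a t :: "nat \<Rightarrow> real"
  assumes adesc: "\<And>i j. i \<le> j \<Longrightarrow> j < m \<Longrightarrow> a j \<le> a i"
    and anonneg: "\<And>i. i < m \<Longrightarrow> 0 \<le> a i"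
    and t01: "\<And>i. i < m \<Longrightarrow> 0 \<le> t i \<and> t i \<le> 1"
    and tsum: "(\<Sum>i<m. t i) \<le> real r"
  shows "(\<Sum>i<m. a i * t i) \<le> (\<Sum>i<min r m. a i)"
proof (cases "m \<le> r")
  case True
  have "(\<Sum>i<m. a i * t i) \<le> (\<Sum>i<m. a i)"
    by (rule sum_mono) (use anonneg t01 in \<open>auto intro: mult_left_le\<close>)
  then show ?thesis using True by (simp add: min_def)
next
  case False
  then have rm: "r < m" by simp
  have split1: "(\<Sum>i<m. a i * t i) = (\<Sum>i<r. a i * t i) + (\<Sum>i\<in>{r..<m}. a i * t i)"
    using rm by (metis lessThan_atLeast0 less_imp_le_nat sum.atLeastLessThan_concat zero_le)
  have split2: "(\<Sum>i<m. t i) = (\<Sum>i<r. t i) + (\<Sum>i\<in>{r..<m}. t i)"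
    using rm by (metis lessThan_atLeast0 less_imp_le_nat sum.atLeastLessThan_concat zero_le)
  have "(\<Sum>i<r. a i * t i) - (\<Sum>i<r. a i) = (\<Sum>i<r. a i * (t i - 1))"
    by (simp add: sum_subtractf[symmetric] algebra_simps)
  also have "\<dots> \<le> (\<Sum>i<r. a r * (t i - 1))"
  proof (rule sum_mono)
    fix i assume "i \<in> {..<r}"
    then have "i \<le> r" "i < m" using rm by auto
    then have "a r \<le> a i" using adesc rm by auto
    moreover have "t i - 1 \<le> 0" using t01 \<open>i < m\<close> by auto
    ultimately show "a i * (t i - 1) \<le> a r * (t i - 1)" by (simp add: mult_right_mono_neg)
  qed
  finally have h1: "(\<Sum>i<r. a i * t i) - (\<Sum>i<r. a i) \<le> a r * ((\<Sum>i<r. t i) - real r)"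
    by (simp add: sum_distrib_left[symmetric] sum_subtractf)
  have h2: "(\<Sum>i\<in>{r..<m}. a i * t i) \<le> (\<Sum>i\<in>{r..<m}. a r * t i)"
  proof (rule sum_mono)
    fix i assume "i \<in> {r..<m}"
    then have "r \<le> i" "i < m" by auto
    then have "a i \<le> a r" using adesc by auto
    then show "a i * t i \<le> a r * t i" using t01 \<open>i < m\<close> by (simp add: mult_right_mono)
  qed
  have h3: "a r * ((\<Sum>i<r. t i) - real r) + (\<Sum>i\<in>{r..<m}. a r * t i) = a r * ((\<Sum>i<m. t i) - real r)"
    unfolding split2 by (simp add: sum_distrib_left[symmetric] algebra_simps)
  have h4: "a r * ((\<Sum>i<m. t i) - real r) \<le> 0"
    using anonneg[OF rm] tsum by (simp add: mult_nonneg_nonpos)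
  show ?thesis using split1 h1 h2 h3 h4 rm by (simp add: min_def)
qed

lemma abel_summation_identity:
  fixes b d :: "nat \<Rightarrow> real"
  shows "(\<Sum>k<Q. b k * d k) = (\<Sum>r<Q. (b r - b (Suc r)) * (\<Sum>k<Suc r. d k)) + b Q * (\<Sum>k<Q. d k)"
  by (induction Q) (simp_all add: algebra_simps)

lemma sum_mult_le_if_prefix_sums_le:
  fixes b c e :: "nat \<Rightarrow> real"
  assumes bdesc: "\<And>i j. i \<le> j \<Longrightarrow> j < q \<Longrightarrow> b j \<le> b i"
    and bnonneg: "\<And>i. i < q \<Longrightarrow> 0 \<le> b i"
    and pref: "\<And>r. r \<le> q \<Longrightarrow> (\<Sum>k<r. c k) \<le> (\<Sum>k<r. e k)"
  shows "(\<Sum>k<q. b k * c k) \<le> (\<Sum>k<q. b k * e k)"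
proof -
  define b' where "b' = (\<lambda>k. if k < q then b k else 0)"
  define d where "d = (\<lambda>k. e k - c k)"
  have "(\<Sum>k<q. b' k * d k) = (\<Sum>r<q. (b' r - b' (Suc r)) * (\<Sum>k<Suc r. d k)) + b' q * (\<Sum>k<q. d k)"
    by (rule abel_summation_identity)
  also have "\<dots> = (\<Sum>r<q. (b' r - b' (Suc r)) * (\<Sum>k<Suc r. d k))" by (simp add: b'_def)
  also have "\<dots> \<ge> 0"
  proof (rule sum_nonneg)
    fix r assume r: "r \<in> {..<q}"
    have "b' (Suc r) \<le> b' r" using r bdesc bnonneg by (auto simp: b'_def)
    moreover have "(\<Sum>k<Suc r. d k) \<ge> 0" using pref[of "Suc r"] r by (simp add: d_def sum_subtractf)
    ultimately show "(b' r - b' (Suc r)) * (\<Sum>k<Suc r. d k) \<ge> 0" by simp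
  qed
  finally have "0 \<le> (\<Sum>k<q. b' k * d k)" .
  also have "(\<Sum>k<q. b' k * d k) = (\<Sum>k<q. b k * e k) - (\<Sum>k<q. b k * c k)"
    by (simp add: b'_def d_def sum_subtractf[symmetric] algebra_simps)
  finally show ?thesis by simp
qed

lemma doubly_substochastic_rearrangement:
  fixes a b :: "nat \<Rightarrow> real" and D :: "nat \<Rightarrow> nat \<Rightarrow> real"
  assumes mq: "m \<le> q"
    and adesc: "\<And>i j. i \<le> j \<Longrightarrow> j < m \<Longrightarrow> a j \<le> a i"
    and anonneg: "\<And>i. i < m \<Longrightarrow> 0 \<le> a i"
    and bdesc: "\<And>i j. i \<le> j \<Longrightarrow> j < q \<Longrightarrow> b j \<le> b i"
    and bnonneg: "\<And>i. i < q \<Longrightarrow> 0 \<le> b i"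
    and Dnonneg: "\<And>i k. i < m \<Longrightarrow> k < q \<Longrightarrow> 0 \<le> D i k"
    and rows: "\<And>i. i < m \<Longrightarrow> (\<Sum>k<q. D i k) \<le> 1"
    and cols: "\<And>k. k < q \<Longrightarrow> (\<Sum>i<m. D i k) \<le> 1"
  shows "(\<Sum>i<m. \<Sum>k<q. a i * b k * D i k) \<le> (\<Sum>i<m. a i * b i)"
proof -
  define c where "c = (\<lambda>k. \<Sum>i<m. a i * D i k)"
  define e where "e = (\<lambda>k. if k < m then a k else 0)"
  have lhs: "(\<Sum>i<m. \<Sum>k<q. a i * b k * D i k) = (\<Sum>k<q. b k * c k)"
    unfolding c_def by (subst sum.swap) (simp add: sum_distrib_left algebra_simps)
  have pref: "(\<Sum>k<r. c k) \<le> (\<Sum>k<r. e k)" if r: "r \<le> q" for r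
  proof -
    define t where "t = (\<lambda>i. \<Sum>k<r. D i k)"
    have "(\<Sum>k<r. c k) = (\<Sum>i<m. a i * t i)"
      unfolding c_def t_def by (subst sum.swap) (simp add: sum_distrib_left)
    also have "\<dots> \<le> (\<Sum>i<min r m. a i)"
    proof (rule sum_weighted_le_sum_prefix[OF adesc anonneg])
      fix i assume i: "i < m"
      have "t i \<le> (\<Sum>k<q. D i k)" unfolding t_def
        by (rule sum_mono2) (use r i Dnonneg in auto)
      then show "0 \<le> t i \<and> t i \<le> 1" using rows[OF i] unfolding t_def
        using Dnonneg i r by (auto intro!: sum_nonneg)
    next
      have "(\<Sum>i<m. t i) = (\<Sum>k<r. \<Sum>i<m. D i k)" unfolding t_def by (rule sum.swap)
      also have "\<dots> \<le> (\<Sum>k<r. 1)" by (rule sum_mono) (use cols r in auto)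
      finally show "(\<Sum>i<m. t i) \<le> real r" by simp
    qed auto
    also have "\<dots> = (\<Sum>k<r. e k)"
    proof -
      have "(\<Sum>k<r. e k) = (\<Sum>k\<in>{..<r} \<inter> {..<m}. a k)"
        unfolding e_def by (simp add: sum.inter_restrict)
      also have "{..<r} \<inter> {..<m} = {..<min r m}" by auto
      finally show ?thesis by simp
    qed
    finally show ?thesis .
  qed
  have "(\<Sum>k<q. b k * c k) \<le> (\<Sum>k<q. b k * e k)"
    by (rule sum_mult_le_if_prefix_sums_le[OF bdesc bnonneg pref]) auto
  also have "(\<Sum>k<q. b k * e k) = (\<Sum>k\<in>{..<q} \<inter> {..<m}. b k * a k)"
    unfolding e_def by (simp add: sum.inter_restrict if_distrib cong: if_cong)
  also have "{..<q} \<inter> {..<m} = {..<m}" using mq by auto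
  finally show ?thesis unfolding lhs by (simp add: mult.commute)
qed

lemma sorted_wrt_ge_nth_mono:
  fixes xs :: "'a :: order list"
  assumes "sorted_wrt (\<ge>) xs" and "i \<le> j" and "j < length xs"
  shows "xs ! j \<le> xs ! i"
  using assms sorted_wrt_nth_less[OF assms(1), of i j] by (cases "i = j") auto

lemma weighted_gram_sum_le:
  fixes W :: "real mat" and s l :: "real list"
  assumes W: "W \<in> carrier_mat m q" and gram: "W * transpose_mat W = mat_diag m (\<lambda>i. 1 - s ! i)"
    and s: "length s = m" "sorted_wrt (\<ge>) s" and s_pos: "\<And>i. i < m \<Longrightarrow> 0 < s ! i"
    and l: "length l = q" "sorted_wrt (\<ge>) l" and l_nonneg: "\<And>k. k < q \<Longrightarrow> 0 \<le> l ! k"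
    and mq: "m \<le> q"
  shows "(\<Sum>i<m. \<Sum>k<q. (W $$ (i, k))\<^sup>2 / s ! i * l ! k) \<le> (\<Sum>j<m. (1 / s ! (m - 1 - j) - 1) * l ! j)"
proof -
  have row: "(\<Sum>k<q. (W $$ (i, k))\<^sup>2) = 1 - s ! i" if "i < m" for i
    using arg_cong[OF gram, of "\<lambda>A. A $$ (i, i)"] W that
    by (simp add: scalar_prod_def lessThan_atLeast0 power2_eq_square mat_diag_def)
  then have s_le: "s ! i \<le> 1" if "i < m" for i
    using sum_nonneg[of "{..<q}" "\<lambda>k. (W $$ (i, k))\<^sup>2"] that by simp
  have summand: "(W $$ (i, k))\<^sup>2 / s ! i * l ! k = (1 / s ! i - 1) * l ! k * ((W $$ (i, k))\<^sup>2 / (1 - s ! i))"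
    if "i < m" "k < q" for i k
  proof (cases "s ! i = 1")
    case True
    then have "W $$ (i, k) = 0"
      using row[OF \<open>i < m\<close>] sum_nonneg_eq_0_iff[of "{..<q}" "\<lambda>k. (W $$ (i, k))\<^sup>2"] \<open>k < q\<close> by simp
    then show ?thesis by simp
  next
    case False
    then show ?thesis using s_pos[OF \<open>i < m\<close>] by (simp add: field_simps)
  qed
  \<comment> \<open>Reversing the row index makes the weights 1/s - 1 non-increasing, as the rearrangement needs.\<close>
  define a where "a j = 1 / s ! (m - Suc j) - 1" for j
  define D where "D j k = (W $$ (m - Suc j, k))\<^sup>2 / (1 - s ! (m - Suc j))" for j k
  have "(\<Sum>i<m. \<Sum>k<q. (W $$ (i, k))\<^sup>2 / s ! i * l ! k) = (\<Sum>i<m. \<Sum>k<q. a (m - Suc i) * l ! k * D (m - Suc i) k)"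
  proof (intro sum.cong refl)
    fix i k assume "i \<in> {..<m}" "k \<in> {..<q}"
    moreover have "m - Suc (m - Suc i) = i" using \<open>i \<in> {..<m}\<close> by auto
    ultimately show "(W $$ (i, k))\<^sup>2 / s ! i * l ! k = a (m - Suc i) * l ! k * D (m - Suc i) k"
      unfolding a_def D_def by (simp only:) (rule summand; simp)
  qed
  also have "\<dots> = (\<Sum>j<m. \<Sum>k<q. a j * l ! k * D j k)"
    by (rule sum.nat_diff_reindex)
  also have "\<dots> \<le> (\<Sum>j<m. a j * l ! j)"
  proof (rule doubly_substochastic_rearrangement[OF mq])
    show "a j \<le> a i" if "i \<le> j" "j < m" for i j
      using that s_pos sorted_wrt_ge_nth_mono[OF s(2), of "m - Suc j" "m - Suc i"] s(1)
      by (simp add: a_def frac_le)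
    show "0 \<le> a i" if "i < m" for i
      using that s_pos s_le by (simp add: a_def)
    show "l ! j \<le> l ! i" if "i \<le> j" "j < q" for i j
      using that sorted_wrt_ge_nth_mono[OF l(2)] l(1) by simp
    show "0 \<le> l ! i" if "i < q" for i using that l_nonneg by simp
    show "0 \<le> D i k" if "i < m" "k < q" for i k
      using that s_le by (simp add: D_def)
    show "(\<Sum>k<q. D i k) \<le> 1" if "i < m" for i
      using that row[of "m - Suc i"] by (simp add: D_def flip: sum_divide_distrib)
    show "(\<Sum>i<m. D i k) \<le> 1" if "k < q" for k
      using column_sum_le_one_if_gram_diag[OF W gram that]
      unfolding D_def sum.nat_diff_reindex[of "\<lambda>i. (W $$ (i, k))\<^sup>2 / (1 - s ! i)"] .
  qed
  finally show ?thesis by (simp add: a_def)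
qed

section \<open>The error of the oblique projection\<close>

lemma inverse_error_sum_eq:
  fixes H Hinv Z X V :: "real mat"
  assumes H: "H \<in> carrier_mat m m" and Hinv: "Hinv \<in> carrier_mat m m" and inv: "Hinv * H = 1\<^sub>m m"
    and gram: "H * transpose_mat H = mat_diag m s" and s: "\<And>i. i < m \<Longrightarrow> s i \<noteq> 0"
    and Z: "Z \<in> carrier_mat m q" and X: "X \<in> carrier_mat q N" and V: "V \<in> carrier_mat q q"
    and XXT: "X * transpose_mat X = V * mat_diag q l * transpose_mat V"
  shows "(\<Sum>c<N. (Hinv *\<^sub>v (Z *\<^sub>v col X c)) \<bullet> (Hinv *\<^sub>v (Z *\<^sub>v col X c)))
    = (\<Sum>i<m. \<Sum>k<q. ((Z * V) $$ (i, k))\<^sup>2 / s i * l k)"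
proof -
  note dims = carrier_matD[OF Z] carrier_matD[OF X] carrier_matD[OF V]
  define R where "R = Z * X"
  have R: "R \<in> carrier_mat m N" using Z X by (simp add: R_def)
  have per_col: "(Hinv *\<^sub>v (Z *\<^sub>v col X c)) \<bullet> (Hinv *\<^sub>v (Z *\<^sub>v col X c)) = (\<Sum>i<m. 1 / s i * (R $$ (i, c))\<^sup>2)"
    if "c < N" for c
  proof -
    have "Z *\<^sub>v col X c = col R c" unfolding R_def by (rule col_mult2[OF Z X that, symmetric])
    moreover have "col R c \<in> carrier_vec m" using R that by simp
    ultimately have "(Hinv *\<^sub>v (Z *\<^sub>v col X c)) \<bullet> (Hinv *\<^sub>v (Z *\<^sub>v col X c)) = (\<Sum>i<m. 1 / s i * (col R c $ i)\<^sup>2)"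
      using scalar_prod_self_mult_mat_vec[OF Hinv _ inverse_gram_diag[OF H Hinv inv gram s]] by simp
    also have "\<dots> = (\<Sum>i<m. 1 / s i * (R $$ (i, c))\<^sup>2)"
      using R that by (intro sum.cong) auto
    finally show ?thesis .
  qed
  have "(\<Sum>c<N. (Hinv *\<^sub>v (Z *\<^sub>v col X c)) \<bullet> (Hinv *\<^sub>v (Z *\<^sub>v col X c)))
      = (\<Sum>c<N. \<Sum>i<m. 1 / s i * (R $$ (i, c))\<^sup>2)"
    by (intro sum.cong refl per_col) simp
  also have "\<dots> = (\<Sum>i<m. 1 / s i * (R * transpose_mat R) $$ (i, i))"
    using R by (subst sum.swap) (simp add: sum_distrib_left scalar_prod_def lessThan_atLeast0 power2_eq_square)
  also have "R * transpose_mat R = (Z * V) * mat_diag q l * transpose_mat (Z * V)"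
  proof -
    have "X * transpose_mat X * transpose_mat Z = V * mat_diag q l * transpose_mat V * transpose_mat Z"
      by (simp add: XXT)
    then show ?thesis
      by (simp add: R_def transpose_mult_dim assoc_mult_mat_dim dims mat_diag_def)
  qed
  also have "(\<Sum>i<m. 1 / s i * ((Z * V) * mat_diag q l * transpose_mat (Z * V)) $$ (i, i))
      = (\<Sum>i<m. 1 / s i * (\<Sum>k<q. ((Z * V) $$ (i, k))\<^sup>2 * l k))"
    using Z V by (intro sum.cong refl) (subst diag_conj_mat_diag[of _ m q], simp_all)
  finally show ?thesis
    by (simp add: sum_distrib_left algebra_simps)
qed

lemma orthogonal_conj_complementary_grams:
  fixes B C Y :: "real mat"
  assumes B: "B \<in> carrier_mat m k" and C: "C \<in> carrier_mat m q" and Y: "Y \<in> carrier_mat m m"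
    and YTY: "transpose_mat Y * Y = 1\<^sub>m m"
    and BC: "B * transpose_mat B + C * transpose_mat C = 1\<^sub>m m"
    and diag: "transpose_mat Y * (B * transpose_mat B) * Y = mat_diag m s"
  shows "(transpose_mat Y * B) * transpose_mat (transpose_mat Y * B) = mat_diag m s"
    and "(transpose_mat Y * C) * transpose_mat (transpose_mat Y * C) = mat_diag m (\<lambda>i. 1 - s i)"
proof -
  note dims = carrier_matD[OF B] carrier_matD[OF C] carrier_matD[OF Y]
  have conj: "(transpose_mat Y * M) * transpose_mat (transpose_mat Y * M) = transpose_mat Y * (M * transpose_mat M) * Y"
    if "dim_row M = m" for M
    using that by (simp add: transpose_mult_dim assoc_mult_mat_dim dims)
  show "(transpose_mat Y * B) * transpose_mat (transpose_mat Y * B) = mat_diag m s"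
    by (simp add: conj dims diag)
  have BBT: "B * transpose_mat B \<in> carrier_mat m m" and CCT: "C * transpose_mat C \<in> carrier_mat m m"
    and YT: "transpose_mat Y \<in> carrier_mat m m"
    using B C Y by simp_all
  have "transpose_mat Y * (B * transpose_mat B) * Y + transpose_mat Y * (C * transpose_mat C) * Y
      = transpose_mat Y * (B * transpose_mat B + C * transpose_mat C) * Y"
    unfolding mult_add_distrib_mat[OF YT BBT CCT]
    by (rule add_mult_distrib_mat[OF mult_carrier_mat[OF YT BBT] mult_carrier_mat[OF YT CCT] Y, symmetric])
  also have "\<dots> = 1\<^sub>m m" using Y by (simp add: BC YTY)
  finally have sum: "mat_diag m s + (transpose_mat Y * C) * transpose_mat (transpose_mat Y * C) = 1\<^sub>m m"
    by (simp add: conj dims diag)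
  define G where "G = (transpose_mat Y * C) * transpose_mat (transpose_mat Y * C)"
  have G: "G \<in> carrier_mat m m" using C Y by (intro carrier_matI) (simp_all add: G_def)
  show "(transpose_mat Y * C) * transpose_mat (transpose_mat Y * C) = mat_diag m (\<lambda>i. 1 - s i)"
    unfolding G_def[symmetric]
  proof (rule eq_matI)
    fix i j assume "i < dim_row (mat_diag m (\<lambda>i. 1 - s i))" "j < dim_col (mat_diag m (\<lambda>i. 1 - s i))"
    then show "G $$ (i, j) = mat_diag m (\<lambda>i. 1 - s i) $$ (i, j)"
      using arg_cong[OF sum[folded G_def], of "\<lambda>A. A $$ (i, j)"] G by (auto simp: mat_diag_def)
  qed (use G in \<open>auto simp: mat_diag_def\<close>)
qed

lemma oblique_inverse_error_eq:
  fixes B Binv C X :: "real mat"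
  assumes B: "B \<in> carrier_mat m m" and Binv: "Binv \<in> carrier_mat m m" and inv: "Binv * B = 1\<^sub>m m"
    and C: "C \<in> carrier_mat m q" and X: "X \<in> carrier_mat q N"
    and BC: "B * transpose_mat B + C * transpose_mat C = 1\<^sub>m m"
  defines "s \<equiv> eigvals_desc (B * transpose_mat B)" and "l \<equiv> eigvals_desc (X * transpose_mat X)"
  obtains W where "W \<in> carrier_mat m q" "W * transpose_mat W = mat_diag m (\<lambda>i. 1 - s ! i)"
    "\<And>i. i < m \<Longrightarrow> 0 < s ! i"
    "(\<Sum>c<N. (Binv *\<^sub>v (C *\<^sub>v col X c)) \<bullet> (Binv *\<^sub>v (C *\<^sub>v col X c)))
      = (\<Sum>i<m. \<Sum>k<q. (W $$ (i, k))\<^sup>2 / s ! i * l ! k)"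
proof -
  have BBT: "B * transpose_mat B \<in> carrier_mat m m" "transpose_mat (B * transpose_mat B) = B * transpose_mat B"
    using B by (simp_all add: transpose_mult[OF B])
  have XXT: "X * transpose_mat X \<in> carrier_mat q q" "transpose_mat (X * transpose_mat X) = X * transpose_mat X"
    using X by (simp_all add: transpose_mult[OF X])
  obtain Y where Y: "Y \<in> carrier_mat m m" "transpose_mat Y * Y = 1\<^sub>m m"
    and Ydiag: "transpose_mat Y * (B * transpose_mat B) * Y = mat_diag m (\<lambda>i. s ! i)"
    using eigvals_desc_symmetric(3)[OF BBT] unfolding s_def by blast
  obtain V where V: "V \<in> carrier_mat q q" "V * transpose_mat V = 1\<^sub>m q"
    and Vdiag: "X * transpose_mat X = V * mat_diag q (\<lambda>k. l ! k) * transpose_mat V"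
    using eigvals_desc_decomposition[OF XXT] unfolding l_def by blast
  define H where "H = transpose_mat Y * B"
  define Z where "Z = transpose_mat Y * C"
  define Hinv where "Hinv = Binv * Y"
  note dims = carrier_matD[OF B] carrier_matD[OF Binv] carrier_matD[OF C] carrier_matD[OF Y(1)]
    carrier_matD[OF V(1)]
  have H: "H \<in> carrier_mat m m" and Z: "Z \<in> carrier_mat m q" and Hinv: "Hinv \<in> carrier_mat m m"
    using B C Binv Y by (simp_all add: H_def Z_def Hinv_def)
  have HHT: "H * transpose_mat H = mat_diag m (\<lambda>i. s ! i)"
    and ZZT: "Z * transpose_mat Z = mat_diag m (\<lambda>i. 1 - s ! i)"
    using orthogonal_conj_complementary_grams[OF B C Y BC Ydiag] by (simp_all add: H_def Z_def)
  have YYT: "Y * transpose_mat Y = 1\<^sub>m m"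
    using mat_mult_left_right_inverse[OF _ Y(1) Y(2)] Y(1) by simp
  have "Binv * (Y * transpose_mat Y) * B = 1\<^sub>m m" using B Binv by (simp add: YYT inv)
  then have Hinv_H: "Hinv * H = 1\<^sub>m m" by (simp add: Hinv_def H_def assoc_mult_mat_dim dims)
  have s_pos: "0 < s ! i" if "i < m" for i
    by (rule gram_diag_pos_if_invertible[OF H Hinv Hinv_H HHT that])
  then have s_nz: "s ! i \<noteq> 0" if "i < m" for i using that by force
  have "Binv *\<^sub>v (C *\<^sub>v col X c) = Hinv *\<^sub>v (Z *\<^sub>v col X c)" if "c < N" for c
    using that B C X Binv Y
    by (simp add: Hinv_def Z_def YYT flip: assoc_mult_mat_vec[of _ m m _ m] assoc_mult_mat_vec[of _ m q _ N])
  then have "(\<Sum>c<N. (Binv *\<^sub>v (C *\<^sub>v col X c)) \<bullet> (Binv *\<^sub>v (C *\<^sub>v col X c)))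
      = (\<Sum>i<m. \<Sum>k<q. ((Z * V) $$ (i, k))\<^sup>2 / s ! i * l ! k)"
    using inverse_error_sum_eq[OF H Hinv Hinv_H HHT s_nz Z X V(1) Vdiag] by simp
  moreover have "Z * V * transpose_mat (Z * V) = Z * (V * transpose_mat V) * transpose_mat Z"
    using Z by (simp add: transpose_mult_dim assoc_mult_mat_dim dims)
  then have "Z * V * transpose_mat (Z * V) = mat_diag m (\<lambda>i. 1 - s ! i)"
    using Z by (simp add: V(2) ZZT)
  moreover have "Z * V \<in> carrier_mat m q" using Z V(1) by simp
  ultimately show ?thesis using that s_pos by blast
qed

lemma oblique_inverse_error_bound:
  fixes B Binv C X :: "real mat"
  assumes B: "B \<in> carrier_mat m m" and Binv: "Binv \<in> carrier_mat m m" and inv: "Binv * B = 1\<^sub>m m"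
    and C: "C \<in> carrier_mat m q" and X: "X \<in> carrier_mat q N" and mq: "m \<le> q"
    and BC: "B * transpose_mat B + C * transpose_mat C = 1\<^sub>m m"
  shows "(\<Sum>c<N. (Binv *\<^sub>v (C *\<^sub>v col X c)) \<bullet> (Binv *\<^sub>v (C *\<^sub>v col X c)))
    \<le> (\<Sum>j<m. (1 / eigvals_desc (B * transpose_mat B) ! (m - 1 - j) - 1) * eigvals_desc (X * transpose_mat X) ! j)"
proof -
  have BBT: "B * transpose_mat B \<in> carrier_mat m m" "transpose_mat (B * transpose_mat B) = B * transpose_mat B"
    using B by (simp_all add: transpose_mult[OF B])
  have XXT: "X * transpose_mat X \<in> carrier_mat q q" "transpose_mat (X * transpose_mat X) = X * transpose_mat X"
    using X by (simp_all add: transpose_mult[OF X])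
  obtain W where W: "W \<in> carrier_mat m q"
    "W * transpose_mat W = mat_diag m (\<lambda>i. 1 - eigvals_desc (B * transpose_mat B) ! i)"
    and s_pos: "\<And>i. i < m \<Longrightarrow> 0 < eigvals_desc (B * transpose_mat B) ! i"
    and error: "(\<Sum>c<N. (Binv *\<^sub>v (C *\<^sub>v col X c)) \<bullet> (Binv *\<^sub>v (C *\<^sub>v col X c)))
      = (\<Sum>i<m. \<Sum>k<q. (W $$ (i, k))\<^sup>2 / eigvals_desc (B * transpose_mat B) ! i * eigvals_desc (X * transpose_mat X) ! k)"
    using oblique_inverse_error_eq[OF B Binv inv C X BC] by blast
  show ?thesis
    unfolding error
  proof (rule weighted_gram_sum_le[OF W _ _ s_pos _ _ _ mq])
    show "length (eigvals_desc (B * transpose_mat B)) = m" "sorted_wrt (\<ge>) (eigvals_desc (B * transpose_mat B))"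
      using eigvals_desc_symmetric[OF BBT] by simp_all
    show "length (eigvals_desc (X * transpose_mat X)) = q" "sorted_wrt (\<ge>) (eigvals_desc (X * transpose_mat X))"
      using eigvals_desc_symmetric[OF XXT] by simp_all
    show "0 \<le> eigvals_desc (X * transpose_mat X) ! k" if "k < q" for k
      by (rule eigvals_desc_gram_nonneg[OF X that])
  qed
qed

lemma selection_operator_orthonormal:
  assumes "selection_operator n m P"
  shows "P \<in> carrier_mat n m" and "transpose_mat P * P = 1\<^sub>m m"
proof -
  obtain p where P: "P \<in> carrier_mat n m" and inj: "inj_on p {..<m}" and p: "p ` {..<m} \<subseteq> {..<n}"
    and P_entry: "\<And>i j. i < n \<Longrightarrow> j < m \<Longrightarrow> P $$ (i, j) = (if i = p j then 1 else 0)"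
    using assms unfolding selection_operator_def by blast
  show "P \<in> carrier_mat n m" by (rule P)
  show "transpose_mat P * P = 1\<^sub>m m"
  proof (rule eq_matI)
    fix i j assume "i < dim_row (1\<^sub>m m :: real mat)" "j < dim_col (1\<^sub>m m :: real mat)"
    then have i: "i < m" and j: "j < m" by auto
    have "(transpose_mat P * P) $$ (i, j) = (\<Sum>k<n. P $$ (k, i) * P $$ (k, j))"
      using P i j by (simp add: scalar_prod_def lessThan_atLeast0)
    also have "\<dots> = (\<Sum>k<n. if k = p i then of_bool (p i = p j) else 0)"
      using i j by (intro sum.cong refl) (simp add: P_entry)
    also have "\<dots> = of_bool (i = j)"
      using p i j inj_onD[OF inj, of i j] by auto
    finally show "(transpose_mat P * P) $$ (i, j) = 1\<^sub>m m $$ (i, j)" using i j by simp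
  qed (use P in auto)
qed

lemma hconcat_orthogonal:
  fixes U1 U2 :: "real mat"
  assumes U1: "U1 \<in> carrier_mat n m" and U2: "U2 \<in> carrier_mat n (n - m)" and mn: "m \<le> n"
    and orth: "transpose_mat (hconcat U1 U2) * hconcat U1 U2 = 1\<^sub>m n"
  shows "transpose_mat U1 * U1 = 1\<^sub>m m"
    and "U1 * transpose_mat U1 + U2 * transpose_mat U2 = 1\<^sub>m n"
proof -
  define U where "U = hconcat U1 U2"
  have U: "U \<in> carrier_mat n n" using U1 U2 mn by (simp add: U_def hconcat_def)
  have U1_entry: "U1 $$ (i, j) = U $$ (i, j)" if "i < n" "j < m" for i j
    using that U1 U2 mn by (simp add: U_def hconcat_def)
  have U2_entry: "U2 $$ (i, j) = U $$ (i, j + m)" if "i < n" "j < n - m" for i j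
    using that U1 U2 mn by (simp add: U_def hconcat_def)
  have UTU: "transpose_mat U * U = 1\<^sub>m n" using orth by (simp add: U_def)
  then have UUT: "U * transpose_mat U = 1\<^sub>m n"
    using mat_mult_left_right_inverse[OF _ U] U by simp
  show "transpose_mat U1 * U1 = 1\<^sub>m m"
  proof (rule eq_matI)
    fix i j assume "i < dim_row (1\<^sub>m m :: real mat)" "j < dim_col (1\<^sub>m m :: real mat)"
    then have i: "i < m" and j: "j < m" by auto
    have "(transpose_mat U1 * U1) $$ (i, j) = (transpose_mat U * U) $$ (i, j)"
      using U1 U i j mn by (simp add: scalar_prod_def U1_entry)
    then show "(transpose_mat U1 * U1) $$ (i, j) = 1\<^sub>m m $$ (i, j)"
      using i j mn by (simp add: UTU)
  qed (use U1 in auto)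
  show "U1 * transpose_mat U1 + U2 * transpose_mat U2 = 1\<^sub>m n"
  proof (rule eq_matI)
    fix i j assume "i < dim_row (1\<^sub>m n :: real mat)" "j < dim_col (1\<^sub>m n :: real mat)"
    then have i: "i < n" and j: "j < n" by auto
    have "(U1 * transpose_mat U1 + U2 * transpose_mat U2) $$ (i, j)
        = (\<Sum>k<m. U $$ (i, k) * U $$ (j, k)) + (\<Sum>k<n - m. U $$ (i, k + m) * U $$ (j, k + m))"
      using U1 U2 i j by (simp add: scalar_prod_def lessThan_atLeast0 U1_entry U2_entry)
    also have "\<dots> = (\<Sum>k<n. U $$ (i, k) * U $$ (j, k))"
      using mn sum.shift_bounds_nat_ivl[of "\<lambda>k. U $$ (i, k) * U $$ (j, k)" 0 m "n - m"]
        sum.atLeastLessThan_concat[of 0 m n "\<lambda>k. U $$ (i, k) * U $$ (j, k)"]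
      by (simp add: lessThan_atLeast0)
    also have "\<dots> = (U * transpose_mat U) $$ (i, j)"
      using U i j by (simp add: scalar_prod_def lessThan_atLeast0)
    finally show "(U1 * transpose_mat U1 + U2 * transpose_mat U2) $$ (i, j) = 1\<^sub>m n $$ (i, j)"
      by (simp add: UUT)
  qed (use U1 U2 in auto)
qed

lemma complementary_grams_transpose_mult:
  fixes P U1 U2 :: "real mat"
  assumes P: "P \<in> carrier_mat n m" and U1: "U1 \<in> carrier_mat n k1" and U2: "U2 \<in> carrier_mat n k2"
    and PTP: "transpose_mat P * P = 1\<^sub>m m"
    and UUT: "U1 * transpose_mat U1 + U2 * transpose_mat U2 = 1\<^sub>m n"
  shows "(transpose_mat P * U1) * transpose_mat (transpose_mat P * U1)
    + (transpose_mat P * U2) * transpose_mat (transpose_mat P * U2) = 1\<^sub>m m"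
proof -
  note dims = carrier_matD[OF P] carrier_matD[OF U1] carrier_matD[OF U2]
  have PT: "transpose_mat P \<in> carrier_mat m n" using P by simp
  have G1: "U1 * transpose_mat U1 \<in> carrier_mat n n" and G2: "U2 * transpose_mat U2 \<in> carrier_mat n n"
    using U1 U2 by simp_all
  have "transpose_mat P * (U1 * transpose_mat U1) * P + transpose_mat P * (U2 * transpose_mat U2) * P
      = transpose_mat P * (U1 * transpose_mat U1 + U2 * transpose_mat U2) * P"
    unfolding mult_add_distrib_mat[OF PT G1 G2]
    by (rule add_mult_distrib_mat[OF mult_carrier_mat[OF PT G1] mult_carrier_mat[OF PT G2] P, symmetric])
  also have "\<dots> = 1\<^sub>m m" using P by (simp add: UUT PTP)
  finally show ?thesis by (simp add: transpose_mult_dim assoc_mult_mat_dim dims)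
qed

lemma oblique_projection_error:
  fixes U1 U2 P Binv :: "real mat" and f :: "real vec"
  assumes U1: "U1 \<in> carrier_mat n m" and U2: "U2 \<in> carrier_mat n k" and P: "P \<in> carrier_mat n m"
    and Binv: "Binv \<in> carrier_mat m m" and inv: "Binv * (transpose_mat P * U1) = 1\<^sub>m m"
    and U1TU1: "transpose_mat U1 * U1 = 1\<^sub>m m"
    and UUT: "U1 * transpose_mat U1 + U2 * transpose_mat U2 = 1\<^sub>m n" and f: "f \<in> carrier_vec n"
  defines "d \<equiv> U1 *\<^sub>v (Binv *\<^sub>v (transpose_mat P *\<^sub>v f)) - U1 *\<^sub>v (transpose_mat U1 *\<^sub>v f)"
    and "e \<equiv> Binv *\<^sub>v ((transpose_mat P * U2) *\<^sub>v (transpose_mat U2 *\<^sub>v f))"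
  shows "d \<bullet> d = e \<bullet> e"
proof -
  define a where "a = transpose_mat U1 *\<^sub>v f"
  define b where "b = transpose_mat U2 *\<^sub>v f"
  have a: "a \<in> carrier_vec m" and b: "b \<in> carrier_vec k" and e: "e \<in> carrier_vec m"
    using U1 U2 P Binv f by (simp_all add: a_def b_def e_def)
  have "f = (U1 * transpose_mat U1 + U2 * transpose_mat U2) *\<^sub>v f" using f by (simp add: UUT)
  also have "\<dots> = U1 *\<^sub>v a + U2 *\<^sub>v b"
    using U1 U2 f
    by (simp add: a_def b_def add_mult_distrib_mat_vec[of _ n n]
        assoc_mult_mat_vec[of _ n m _ n] assoc_mult_mat_vec[of _ n k _ n])
  finally have "transpose_mat P *\<^sub>v f = (transpose_mat P * U1) *\<^sub>v a + (transpose_mat P * U2) *\<^sub>v b"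
    using U1 U2 P a b
    by (simp add: mult_add_distrib_mat_vec[of _ m n] assoc_mult_mat_vec[of _ m n _ m] assoc_mult_mat_vec[of _ m n _ k])
  then have "Binv *\<^sub>v (transpose_mat P *\<^sub>v f) = (Binv * (transpose_mat P * U1)) *\<^sub>v a + e"
    using U1 U2 P Binv a b unfolding e_def b_def[symmetric]
    by (simp add: mult_add_distrib_mat_vec[of _ m m] assoc_mult_mat_vec[of _ m m _ m])
  then have "d = U1 *\<^sub>v a + U1 *\<^sub>v e - U1 *\<^sub>v a"
    using U1 a e by (simp add: d_def inv mult_add_distrib_mat_vec[OF U1] flip: a_def)
  also have "\<dots> = U1 *\<^sub>v e"
    using mult_mat_vec_carrier[OF U1 a] mult_mat_vec_carrier[OF U1 e] by (intro eq_vecI) auto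
  finally have "d = U1 *\<^sub>v e" .
  then show ?thesis
    using transpose_vec_mult_scalar[OF U1 e, of "U1 *\<^sub>v e"] U1 e
    by (simp add: U1TU1 flip: assoc_mult_mat_vec[of _ m n _ m])
qed

lemma oblique_projection_error_bound:
  fixes U1 U2 P Binv F :: "real mat"
  assumes mq: "m \<le> n - m" and U1: "U1 \<in> carrier_mat n m" and U2: "U2 \<in> carrier_mat n (n - m)"
    and U1TU1: "transpose_mat U1 * U1 = 1\<^sub>m m"
    and UUT: "U1 * transpose_mat U1 + U2 * transpose_mat U2 = 1\<^sub>m n"
    and P: "P \<in> carrier_mat n m" and PTP: "transpose_mat P * P = 1\<^sub>m m"
    and Binv: "Binv \<in> carrier_mat m m" and inv: "Binv * (transpose_mat P * U1) = 1\<^sub>m m"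
    and F: "F \<in> carrier_mat n N"
  defines "d c \<equiv> U1 *\<^sub>v (Binv *\<^sub>v (transpose_mat P *\<^sub>v col F c)) - U1 *\<^sub>v (transpose_mat U1 *\<^sub>v col F c)"
    and "X \<equiv> transpose_mat U2 * F"
  shows "(\<Sum>c<N. d c \<bullet> d c)
    \<le> (\<Sum>j<m. (1 / (sing_vals_desc (transpose_mat P * U1) ! (m - 1 - j))\<^sup>2 - 1)
        * eigvals_desc (X * transpose_mat X) ! j)"
proof -
  define B where "B = transpose_mat P * U1"
  define C where "C = transpose_mat P * U2"
  have B: "B \<in> carrier_mat m m" and C: "C \<in> carrier_mat m (n - m)" and X: "X \<in> carrier_mat (n - m) N"
    using P U1 U2 F by (simp_all add: B_def C_def X_def)
  have Binv_B: "Binv * B = 1\<^sub>m m" using inv by (simp add: B_def)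
  have BC: "B * transpose_mat B + C * transpose_mat C = 1\<^sub>m m"
    using complementary_grams_transpose_mult[OF P U1 U2 PTP UUT] by (simp add: B_def C_def)
  have "d c \<bullet> d c = (Binv *\<^sub>v (C *\<^sub>v col X c)) \<bullet> (Binv *\<^sub>v (C *\<^sub>v col X c))" if "c < N" for c
    using oblique_projection_error[OF U1 U2 P Binv inv U1TU1 UUT col_carrier_vec[OF that F]]
      col_mult2[OF transpose_carrier_mat[THEN iffD2, OF U2] F that] by (simp add: d_def C_def X_def)
  then have "(\<Sum>c<N. d c \<bullet> d c) = (\<Sum>c<N. (Binv *\<^sub>v (C *\<^sub>v col X c)) \<bullet> (Binv *\<^sub>v (C *\<^sub>v col X c)))"
    by (intro sum.cong) simp_all
  also have "\<dots> \<le> (\<Sum>j<m. (1 / eigvals_desc (B * transpose_mat B) ! (m - 1 - j) - 1)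
      * eigvals_desc (X * transpose_mat X) ! j)"
    by (rule oblique_inverse_error_bound[OF B Binv Binv_B C X mq BC])
  also have "\<dots> = (\<Sum>j<m. (1 / (sing_vals_desc B ! (m - 1 - j))\<^sup>2 - 1) * eigvals_desc (X * transpose_mat X) ! j)"
    using sing_vals_desc_sq[OF B Binv Binv_B] by simp
  finally show ?thesis by (simp add: B_def)
qed

theorem theorem2:
  fixes n m N :: nat and S :: "real set" and f :: "real \<Rightarrow> real vec"
    and U1 U2 P Binv :: "real mat" and mu :: "nat \<Rightarrow> real"
  assumes "1 \<le> m" and "m < n" and "2 * m \<le> n"
    and f_dim: "\<forall>x\<in>S. f x \<in> carrier_vec n"
    and U1: "U1 \<in> carrier_mat n m" and U2: "U2 \<in> carrier_mat n (n - m)"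
    and orth: "transpose_mat (hconcat U1 U2) * hconcat U1 U2 = 1\<^sub>m n"
    and range: "\<forall>x\<in>S. (\<exists>c\<in>carrier_vec n. f x = hconcat U1 U2 *\<^sub>v c)"
    and sel: "selection_operator n m P"
    and inv: "Binv \<in> carrier_mat m m"
      "(transpose_mat P * U1) * Binv = 1\<^sub>m m" "Binv * (transpose_mat P * U1) = 1\<^sub>m m"
    and mu: "\<forall>i<N. mu i \<in> S"
  shows
   "(let \<sigma> = sing_vals_desc (transpose_mat P * U1);
         ft = (\<lambda>i. U1 *\<^sub>v (Binv *\<^sub>v (transpose_mat P *\<^sub>v f (mu i))));
         fh = (\<lambda>i. U1 *\<^sub>v (transpose_mat U1 *\<^sub>v f (mu i)));
         X = transpose_mat U2 * mat n N (\<lambda>(r,c). f (mu c) $ r);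
         lam = eigvals_desc (X * transpose_mat X)
     in (1 / real N) * (\<Sum>i<N. (ft i - fh i) \<bullet> (ft i - fh i))
        \<le> (1 / real N) * (\<Sum>j<m. (1 / (\<sigma> ! (m - 1 - j))\<^sup>2 - 1) * (lam ! j)))"
proof -
  have mn: "m \<le> n" and mq: "m \<le> n - m" using \<open>2 * m \<le> n\<close> by auto
  define F where "F = mat n N (\<lambda>(r, c). f (mu c) $ r)"
  have F: "F \<in> carrier_mat n N" by (simp add: F_def)
  have "col F c = f (mu c)" if "c < N" for c
  proof -
    have "f (mu c) \<in> carrier_vec n" using f_dim mu that by blast
    then show ?thesis using that by (intro eq_vecI) (auto simp: F_def)
  qed
  then have "(\<Sum>i<N. (U1 *\<^sub>v (Binv *\<^sub>v (transpose_mat P *\<^sub>v f (mu i))) - U1 *\<^sub>v (transpose_mat U1 *\<^sub>v f (mu i)))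
      \<bullet> (U1 *\<^sub>v (Binv *\<^sub>v (transpose_mat P *\<^sub>v f (mu i))) - U1 *\<^sub>v (transpose_mat U1 *\<^sub>v f (mu i))))
    \<le> (\<Sum>j<m. (1 / (sing_vals_desc (transpose_mat P * U1) ! (m - 1 - j))\<^sup>2 - 1)
        * eigvals_desc ((transpose_mat U2 * F) * transpose_mat (transpose_mat U2 * F)) ! j)"
    using oblique_projection_error_bound[OF mq U1 U2 hconcat_orthogonal[OF U1 U2 mn orth]
        selection_operator_orthonormal[OF sel] inv(1,3) F] by simp
  then show ?thesis
    unfolding Let_def F_def[symmetric] by (intro mult_left_mono) simp_all
qed

end
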